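(* For every odd integer $n \ge 3$, the sets $S_{0,0}(n)$ and $S_{1,1}(n)$ have the same cardinality.
   Context: For $n \ge 2$, let $\mathcal{I}_n$ be the set of all irreducible polynomials of degree $n$ in $\mathbb{F}_2[x]$. Every $f \in \mathcal{I}_n$ is monic with constant term $1$; write $f = x^n + f_{n-1}x^{n-1} + \cdots + f_1 x + 1$ with $f_k \in \mathbb{F}_2$. The coefficient $f_{n-1}$ is the trace of $f$ and $f_1$ is its cotrace. For $i,j \in \mathbb{F}_2$, $S_{i,j}(n)$ denotes the set of $f \in \mathcal{I}_n$ with $f_{n-1} = i$ and $f_1 = j$. *)

theory Defs
  imports "HOL-Library.Z2" "HOL-Computational_Algebra.Polynomial"
begin

definition irr_polys :: "nat \<Rightarrow> bit poly set" where
  "irr_polys n = {f. irreducible f \<and> lead_coeff f = 1 \<and> degree f = n}"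

text \<open>S i j n: irreducible f of degree n with trace coeff f (n-1) = i and cotrace coeff f 1 = j.\<close>
definition S :: "bit \<Rightarrow> bit \<Rightarrow> nat \<Rightarrow> bit poly set" where
  "S i j n = {f \<in> irr_polys n. coeff f (n - 1) = i \<and> coeff f 1 = j}"

end

theory Submission
  imports Defs
begin

text \<open>
  Reversal \<open>f \<mapsto> x\<^sup>n f(1/x)\<close> preserves irreducibility of polynomials with
  nonzero constant term and exchanges trace and cotrace, so \<open>|S\<^sub>0\<^sub>1(n)| = |S\<^sub>1\<^sub>0(n)|\<close>.
  The substitution \<open>x \<mapsto> x + 1\<close> preserves irreducibility and adds \<open>n\<close> times the
  leading coefficient to the trace; for odd \<open>n\<close> it therefore exchanges the irreducibles
  of trace 0 and trace 1, so \<open>|S\<^sub>0\<^sub>0(n)| + |S\<^sub>0\<^sub>1(n)| = |S\<^sub>1\<^sub>0(n)| + |S\<^sub>1\<^sub>1(n)|\<close>.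
\<close>

lemma irreducible_bij_mult:
  fixes \<phi> :: "'a::comm_semiring_1 \<Rightarrow> 'b::comm_semiring_1"
  assumes mult: "\<And>a b. \<phi> (a * b) = \<phi> a * \<phi> b" and "bij \<phi>" and "irreducible x"
  shows "irreducible (\<phi> x)"
proof -
  have inj: "\<phi> a = \<phi> b \<longleftrightarrow> a = b" for a b
    using \<open>bij \<phi>\<close> by (auto dest: bij_is_inj injD)
  have surj: "\<exists>a. \<phi> a = b" for b
    using \<open>bij \<phi>\<close> by (metis bij_pointE)
  have one: "\<phi> 1 = 1"
  proof -
    obtain u where "\<phi> u = 1" using surj by blast
    then have "\<phi> 1 = \<phi> 1 * \<phi> u" by simp
    also have "\<dots> = \<phi> (1 * u)" by (simp only: mult)
    also have "\<dots> = 1" using \<open>\<phi> u = 1\<close> by simp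
    finally show ?thesis .
  qed
  have zero: "\<phi> 0 = 0"
  proof -
    obtain z where "\<phi> z = 0" using surj by blast
    have "\<phi> 0 = \<phi> 0 * \<phi> z" by (simp flip: mult)
    with \<open>\<phi> z = 0\<close> show ?thesis by simp
  qed
  have unit: "\<phi> a dvd 1 \<longleftrightarrow> a dvd 1" for a
  proof
    assume "\<phi> a dvd 1"
    then obtain c where "\<phi> (a * c) = \<phi> 1"
      using surj one by (metis dvdE mult)
    then have "1 = a * c" by (simp add: inj)
    then show "a dvd 1" ..
  next
    assume "a dvd 1"
    then obtain c where "1 = a * c" ..
    then have "1 = \<phi> a * \<phi> c" by (simp flip: mult add: one)
    then show "\<phi> a dvd 1" ..
  qed
  show ?thesis
  proof (rule irreducibleI)
    have "x \<noteq> 0" "\<not> x dvd 1"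
      using assms(3) by (auto simp: irreducible_def)
    then show "\<phi> x \<noteq> 0" "\<not> \<phi> x dvd 1"
      by (metis inj zero, simp add: unit)
    fix a b assume "\<phi> x = a * b"
    moreover obtain a' b' where "\<phi> a' = a" "\<phi> b' = b" using surj by blast
    ultimately have "\<phi> x = \<phi> (a' * b')" by (simp only: mult)
    then have "x = a' * b'" by (simp only: inj)
    then show "a dvd 1 \<or> b dvd 1"
      using irreducibleD[OF assms(3)] unit \<open>\<phi> a' = a\<close> \<open>\<phi> b' = b\<close> by blast
  qed
qed

lemma pcompose_shift_shift:
  fixes p :: "'a::comm_semiring_1 poly"
  shows "(p \<circ>\<^sub>p [:c, 1:]) \<circ>\<^sub>p [:d, 1:] = p \<circ>\<^sub>p [:d + c, 1:]"
  by (simp add: pcompose_assoc[symmetric] pcompose_pCons add.commute)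

lemma irreducible_pcompose_shift:
  fixes p :: "'a::comm_ring_1 poly"
  assumes "irreducible p"
  shows "irreducible (p \<circ>\<^sub>p [:c, 1:])"
proof (rule irreducible_bij_mult[OF _ _ assms])
  show "(a * b) \<circ>\<^sub>p [:c, 1:] = a \<circ>\<^sub>p [:c, 1:] * b \<circ>\<^sub>p [:c, 1:]" for a b
    by (rule pcompose_mult)
  show "bij (\<lambda>p. p \<circ>\<^sub>p [:c, 1:])"
    by (rule o_bij[where g = "\<lambda>p. p \<circ>\<^sub>p [:- c, 1:]"]) (simp_all add: fun_eq_iff pcompose_shift_shift)
qed

lemma pcompose_shift_pCons:
  fixes p :: "'a::comm_semiring_1 poly"
  shows "pCons a p \<circ>\<^sub>p [:c, 1:] = smult c (p \<circ>\<^sub>p [:c, 1:]) + pCons a (p \<circ>\<^sub>p [:c, 1:])"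
  by (simp add: pcompose_pCons poly_eq_iff coeff_pCons add.commute split: nat.split)

lemma coeff_pcompose_shift_degree_le:
  fixes p :: "'a::comm_semiring_1 poly"
  assumes "degree p \<le> n"
  shows "coeff (p \<circ>\<^sub>p [:c, 1:]) n = coeff p n"
  using assms
proof (induction p arbitrary: n)
  case (pCons a p)
  show ?case
  proof (cases n)
    case 0
    with pCons.prems have "p = 0" by (auto split: if_splits)
    with 0 show ?thesis by simp
  next
    case (Suc m)
    with pCons.prems have "degree p \<le> m" by (auto split: if_splits)
    with Suc show ?thesis
      by (simp add: pcompose_shift_pCons pCons.IH coeff_eq_0)
  qed
qed simp

lemma coeff_pcompose_shift_pred_degree:
  fixes p :: "'a::comm_semiring_1 poly"
  assumes "degree p \<le> Suc n"
  shows "coeff (p \<circ>\<^sub>p [:c, 1:]) n = coeff p n + of_nat (Suc n) * c * coeff p (Suc n)"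
  using assms
proof (induction p arbitrary: n)
  case (pCons a p)
  then have "degree p \<le> n" by (auto split: if_splits)
  show ?case
  proof (cases n)
    case 0
    with \<open>degree p \<le> n\<close> show ?thesis
      by (simp add: pcompose_shift_pCons coeff_pcompose_shift_degree_le add.commute
          del: coeff_pcompose_0)
  next
    case (Suc m)
    with \<open>degree p \<le> n\<close> show ?thesis
      by (simp add: pcompose_shift_pCons pCons.IH coeff_pcompose_shift_degree_le algebra_simps)
  qed
qed simp

lemma irreducible_coeff_0_neq_0:
  fixes f :: "'a::idom poly"
  assumes "irreducible f" and "degree f \<noteq> 1"
  shows "coeff f 0 \<noteq> 0"
proof
  assume "coeff f 0 = 0"
  then obtain g where g: "f = [:0, 1:] * g"
    by (metis dvdE dvd_iff_poly_eq_0 minus_zero poly_0_coeff_0)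
  moreover have "\<not> [:0, 1 :: 'a:] dvd 1"
    by (auto simp: is_unit_poly_iff)
  ultimately have "g dvd 1"
    using irreducibleD[OF assms(1)] by blast
  then obtain u where "g = [:u:]" "u dvd 1"
    by (rule is_unit_polyE)
  with g have "degree f = 1"
    by auto
  with assms(2) show False ..
qed

lemma is_unit_reflect_poly_iff:
  fixes p :: "'a::idom poly"
  assumes "coeff p 0 \<noteq> 0"
  shows "reflect_poly p dvd 1 \<longleftrightarrow> p dvd 1"
  using assms by (metis is_unit_poly_iff reflect_poly_const reflect_poly_reflect_poly)

lemma irreducible_reflect_poly:
  fixes f :: "'a::idom poly"
  assumes "irreducible f" and "coeff f 0 \<noteq> 0"
  shows "irreducible (reflect_poly f)"
proof (rule irreducibleI)
  show "reflect_poly f \<noteq> 0" "\<not> reflect_poly f dvd 1"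
    using assms by (auto simp: is_unit_reflect_poly_iff irreducible_def)
  fix a b assume ab: "reflect_poly f = a * b"
  have "coeff (reflect_poly f) 0 \<noteq> 0"
    using assms by (auto simp: irreducible_def)
  then have "coeff a 0 \<noteq> 0" "coeff b 0 \<noteq> 0"
    by (auto simp: ab coeff_mult_0)
  moreover have "f = reflect_poly a * reflect_poly b"
    using ab assms(2) by (metis reflect_poly_mult reflect_poly_reflect_poly)
  ultimately show "a dvd 1 \<or> b dvd 1"
    using irreducibleD[OF assms(1)] by (metis is_unit_reflect_poly_iff)
qed

lemma finite_polys_degree_le:
  assumes "finite (UNIV :: 'a::zero set)"
  shows "finite {p :: 'a poly. degree p \<le> n}"
proof (rule finite_subset)
  show "{p :: 'a poly. degree p \<le> n} \<subseteq> Poly ` {xs. set xs \<subseteq> UNIV \<and> length xs = Suc n}"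
  proof
    fix p :: "'a poly" assume "p \<in> {p. degree p \<le> n}"
    then have "p = Poly (map (coeff p) [0..<Suc n])"
      by (auto simp: poly_eq_iff nth_default_def coeff_eq_0 simp del: upt_Suc)
    then show "p \<in> Poly ` {xs. set xs \<subseteq> UNIV \<and> length xs = Suc n}"
      by (intro image_eqI) auto
  qed
  show "finite (Poly ` {xs. set xs \<subseteq> (UNIV :: 'a set) \<and> length xs = Suc n})"
    using assms by (intro finite_imageI finite_lists_length_eq)
qed

definition irr_polys_trace :: "bit \<Rightarrow> nat \<Rightarrow> bit poly set" where
  "irr_polys_trace i n = {f \<in> irr_polys n. coeff f (n - 1) = i}"

lemma finite_irr_polys: "finite (irr_polys n)"
proof (rule finite_subset)
  have "finite (UNIV :: bit set)"
    by (rule finite_subset[of _ "{0, 1}"]) auto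
  then show "finite {p :: bit poly. degree p \<le> n}"
    by (rule finite_polys_degree_le)
qed (auto simp: irr_polys_def)

lemma finite_S: "finite (S i j n)"
  using finite_irr_polys by (rule rev_finite_subset) (auto simp: S_def)

lemma reflect_poly_in_S:
  assumes "f \<in> S i j n" and "n \<ge> 2"
  shows "reflect_poly f \<in> S j i n"
proof -
  have f: "irreducible f" "lead_coeff f = 1" "degree f = n" "coeff f (n - 1) = i" "coeff f 1 = j"
    using assms(1) by (auto simp: S_def irr_polys_def)
  then have "coeff f 0 \<noteq> 0"
    using assms(2) by (intro irreducible_coeff_0_neq_0) auto
  then have "irreducible (reflect_poly f)" "degree (reflect_poly f) = n"
    using f by (simp_all add: irreducible_reflect_poly)
  moreover have "coeff (reflect_poly f) k = coeff f (n - k)" if "k \<le> n" for k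
    using f that by (simp add: coeff_reflect_poly)
  ultimately show ?thesis
    using f assms(2) \<open>coeff f 0 \<noteq> 0\<close> by (simp add: S_def irr_polys_def)
qed

lemma card_S_swap:
  assumes "n \<ge> 2"
  shows "card (S i j n) = card (S j i n)"
proof (rule bij_betw_same_card[of reflect_poly])
  have involution: "reflect_poly (reflect_poly f) = f" if "f \<in> S k l n" for f k l
    using that assms irreducible_coeff_0_neq_0[of f] by (simp add: S_def irr_polys_def)
  show "bij_betw reflect_poly (S i j n) (S j i n)"
  proof (rule bij_betw_byWitness[where f' = reflect_poly])
    show "reflect_poly ` S i j n \<subseteq> S j i n" "reflect_poly ` S j i n \<subseteq> S i j n"
      using reflect_poly_in_S assms by blast+
  qed (use involution in blast)+
qed

lemma pcompose_x_plus_1_in_irr_polys_trace: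
  assumes "f \<in> irr_polys_trace i n" and "odd n"
  shows "f \<circ>\<^sub>p [:1, 1:] \<in> irr_polys_trace (i + 1) n"
proof -
  obtain m where n: "n = Suc m"
    using \<open>odd n\<close> by (cases n) auto
  have f: "irreducible f" "lead_coeff f = 1" "degree f = n" "coeff f m = i"
    using assms(1) by (auto simp: irr_polys_trace_def irr_polys_def n)
  have "(of_nat n :: bit) = 1"
    using \<open>odd n\<close> by (elim oddE) simp
  then have trace: "coeff (f \<circ>\<^sub>p [:1, 1:]) m = i + 1"
    using f coeff_pcompose_shift_pred_degree[of f m 1] by (simp add: n)
  have degree: "degree (f \<circ>\<^sub>p [:1, 1:]) = n"
    using f by (simp add: degree_pcompose)
  then have "lead_coeff (f \<circ>\<^sub>p [:1, 1:]) = 1"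
    using f coeff_pcompose_shift_degree_le[of f n 1] by simp
  with f trace degree show ?thesis
    by (simp add: irr_polys_trace_def irr_polys_def irreducible_pcompose_shift n)
qed

lemma card_irr_polys_trace_0_eq_1:
  assumes "odd n"
  shows "card (irr_polys_trace 0 n) = card (irr_polys_trace 1 n)"
proof (rule bij_betw_same_card[of "\<lambda>f. f \<circ>\<^sub>p [:1, 1:]"])
  have involution: "f \<circ>\<^sub>p [:1, 1:] \<circ>\<^sub>p [:1, 1:] = f" for f :: "bit poly"
    by (simp add: pcompose_shift_shift)
  show "bij_betw (\<lambda>f. f \<circ>\<^sub>p [:1, 1:]) (irr_polys_trace 0 n) (irr_polys_trace 1 n)"
    using pcompose_x_plus_1_in_irr_polys_trace[OF _ assms, of _ 0]
      pcompose_x_plus_1_in_irr_polys_trace[OF _ assms, of _ 1]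
    by (intro bij_betw_byWitness[where f' = "\<lambda>f. f \<circ>\<^sub>p [:1, 1:]"]) (auto simp: involution)
qed

lemma card_irr_polys_trace:
  "card (irr_polys_trace i n) = card (S i 0 n) + card (S i 1 n)"
proof -
  have "irr_polys_trace i n = S i 0 n \<union> S i 1 n"
    by (auto simp: irr_polys_trace_def S_def intro: bit.exhaust)
  moreover have "S i 0 n \<inter> S i 1 n = {}"
    by (auto simp: S_def)
  ultimately show ?thesis
    by (simp add: card_Un_disjoint finite_S)
qed

theorem theorem1:
  fixes n :: nat
  assumes "odd n" and "n \<ge> 3"
  shows "card (S 0 0 n) = card (S 1 1 n)"
proof -
  have "card (S 0 0 n) + card (S 0 1 n) = card (S 1 0 n) + card (S 1 1 n)"
    using card_irr_polys_trace_0_eq_1[OF assms(1)] by (simp add: card_irr_polys_trace)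
  moreover have "card (S 0 1 n) = card (S 1 0 n)"
    using assms(2) by (intro card_S_swap) simp
  ultimately show ?thesis
    by simp
qed

end
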